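(* For every $\delta\in(0,1/10)$ there exists a constant $C_\delta$ such that the following holds. Let $Z_0\in\mathbb H$, $\alpha\in(0,1)$, and $F\in S(\alpha)$ such that $F$ has no fixed point in $\mathbb H$ (i.e. no $Z$ with $F(Z)=Z$) except possibly the points of $Z_0+\mathbb Z$. If $${\rm Im}(Z)\ge{\rm Im}(Z_0)+\frac{1}{2\pi}\Big(\log\log\frac{e}{\alpha}-\log\big(1+2\pi{\rm Im}(Z_0)\big)\Big)+C_\delta,$$ then $|F(Z)-Z-\alpha|\le\delta\alpha$.
   Context: $\mathbb H$ is the upper half-plane and $T(Z)=Z+1$. For real $\alpha$, $S(\alpha)$ is the set of univalent maps $F:\mathbb H\to\mathbb C$ with $F\circ T=T\circ F$ and $F(Z)-Z\to\alpha$ as ${\rm Im}(Z)\to+\infty$. *)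

theory Defs
  imports "HOL-Complex_Analysis.Complex_Analysis"
begin

definition upper_half_plane :: "complex set" where
  "upper_half_plane = {z. Im z > 0}"

text \<open>The class S(alpha): univalent (holomorphic and injective) maps F on the upper
half-plane commuting with the translation T(Z) = Z + 1 and with F(Z) - Z tending to
alpha as Im Z tends to +infinity (uniformly in Re Z).\<close>
definition S_class :: "real \<Rightarrow> (complex \<Rightarrow> complex) set" where
  "S_class \<alpha> = {F. F holomorphic_on upper_half_plane \<and> inj_on F upper_half_plane
      \<and> (\<forall>z\<in>upper_half_plane. F (z + 1) = F z + 1)
      \<and> ((\<lambda>z. F z - z) \<longlongrightarrow> complex_of_real \<alpha>) (filtercomap Im at_top)}"

end

theory Submission
  imports Defs
begin

text \<open>
  In the coordinate \<open>q = exp (2 \<pi> i Z)\<close> the displacement \<open>F Z - Z\<close> becomes a holomorphic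
  function \<open>g\<close> on the unit disc with \<open>g 0 = \<alpha>\<close>, and \<open>q exp (2 \<pi> i g q)\<close> is univalent with
  derivative \<open>1\<close> at the origin. Schwarz's lemma and the simple connectivity of its image give two
  omitted values of controlled size, so Schottky's theorem bounds it, and hence \<open>g\<close>, by a constant
  \<open>K\<close> on a fixed disc. By the hypothesis on fixed points, \<open>g\<close> vanishes at most at \<open>q0 = exp (2 \<pi> i Z0)\<close>.
  If \<open>q0\<close> is not close to the origin, the Borel-Caratheodory inequality for \<open>log g\<close> shows
  \<open>\<bar>g q - \<alpha>\<bar> \<le> \<delta> \<alpha>\<close> for \<open>\<bar>q\<bar> \<lesssim> 1 / log (e / \<alpha>)\<close>. Otherwise one divides out
  \<open>(q - q0)\<^sup>n\<close>: the maximum principle bounds \<open>n log (1 / \<bar>q0\<bar>)\<close> by \<open>log (K / \<alpha>)\<close>, so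
  \<open>(1 - q / q0)\<^sup>n\<close> stays close to \<open>1\<close> as long as \<open>\<bar>q\<bar> \<lesssim> \<bar>q0\<bar> log (1 / \<bar>q0\<bar>) / log (e / \<alpha>)\<close>.
  Translated back to \<open>Im Z\<close>, this is the threshold of the theorem.
\<close>

section \<open>Elementary inequalities\<close>

lemma norm_exp_minus_one_le: "norm (exp z - 1) \<le> exp (norm z) - 1" for z :: complex
proof -
  have s1: "(\<lambda>n. z^(Suc n) /\<^sub>R fact (Suc n)) sums (exp z - 1)"
    using exp_converges[of z] sums_Suc_iff[of "\<lambda>n. z^n /\<^sub>R fact n" "exp z - 1"] by simp
  have s2: "(\<lambda>n. norm z^(Suc n) /\<^sub>R fact (Suc n)) sums (exp (norm z) - 1)"
    using exp_converges[of "norm z"] sums_Suc_iff[of "\<lambda>n. norm z^n /\<^sub>R fact n" "exp (norm z) - 1"]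
    by simp
  have norms: "(\<lambda>n. norm (z^(Suc n) /\<^sub>R fact (Suc n))) = (\<lambda>n. norm z^(Suc n) /\<^sub>R fact (Suc n))"
    by (simp add: norm_power norm_mult)
  have "norm (exp z - 1) = norm (\<Sum>n. z^(Suc n) /\<^sub>R fact (Suc n))"
    using s1 sums_unique by metis
  also have "\<dots> \<le> (\<Sum>n. norm (z^(Suc n) /\<^sub>R fact (Suc n)))"
  proof (rule summable_norm)
    show "summable (\<lambda>n. norm (z^(Suc n) /\<^sub>R fact (Suc n)))"
      unfolding norms using s2 by (rule sums_summable)
  qed
  also have "\<dots> = exp (norm z) - 1"
    using s2 by (simp only: norms sums_iff)
  finally show ?thesis .
qed

lemma exp_minus_one_le_double: "0 \<le> x \<Longrightarrow> x \<le> 1 \<Longrightarrow> exp x - 1 \<le> 2 * x" for x :: real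
  using exp_bound[of x] mult_left_le_one_le[of x x] by (simp add: power2_eq_square)

lemma norm_exp_minus_one_le_double: "norm z \<le> 1 \<Longrightarrow> norm (exp z - 1) \<le> 2 * norm z"
  for z :: complex
  using norm_exp_minus_one_le[of z] exp_minus_one_le_double[of "norm z"] by simp

lemma norm_one_plus_power_minus_one_le:
  "norm ((1 + w) ^ n - 1) \<le> exp (real n * norm w) - 1" for w :: complex
proof (induction n)
  case 0
  then show ?case by simp
next
  case (Suc n)
  have "(1 + w) ^ Suc n - 1 = (1 + w) * ((1 + w) ^ n - 1) + w"
    by (simp add: algebra_simps)
  then have "norm ((1 + w) ^ Suc n - 1) \<le> norm (1 + w) * norm ((1 + w) ^ n - 1) + norm w"
    by (metis norm_mult norm_triangle_ineq)
  also have "\<dots> \<le> exp (norm w) * (exp (real n * norm w) - 1) + (exp (norm w) - 1)"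
  proof -
    have "norm (1 + w) \<le> 1 + norm w"
      using norm_triangle_ineq[of 1 w] by simp
    also have "\<dots> \<le> exp (norm w)"
      by (rule exp_ge_add_one_self)
    finally have "norm (1 + w) \<le> exp (norm w)" .
    moreover have "norm w \<le> exp (norm w) - 1"
      using exp_ge_add_one_self[of "norm w"] by linarith
    ultimately show ?thesis
      using Suc by (intro add_mono mult_mono) auto
  qed
  also have "\<dots> = exp (real (Suc n) * norm w) - 1"
    by (simp add: algebra_simps exp_add[symmetric])
  finally show ?case .
qed

lemma norm_mult_minus_one_le:
  fixes a b :: complex
  assumes "norm (a - 1) \<le> e" "norm (b - 1) \<le> e" "e \<le> 1"
  shows "norm (a * b - 1) \<le> 3 * e"
proof -
  have e: "0 \<le> e" using assms(1) norm_ge_zero[of "a - 1"] by linarith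
  have "norm b \<le> 1 + e" using assms(2) norm_triangle_ineq2[of b 1] by simp
  have "a * b - 1 = (a - 1) * b + (b - 1)" by (simp add: algebra_simps)
  then have "norm (a * b - 1) \<le> norm (a - 1) * norm b + norm (b - 1)"
    by (metis norm_mult norm_triangle_ineq)
  also have "\<dots> \<le> e * (1 + e) + e"
    using assms \<open>norm b \<le> 1 + e\<close> e by (intro add_mono mult_mono) auto
  also have "\<dots> \<le> 3 * e"
    using assms(3) e mult_left_le_one_le[of e e] by (simp add: algebra_simps)
  finally show ?thesis .
qed

lemma mult_one_plus_ln_inverse_le_one: "0 < s \<Longrightarrow> s * (1 + ln (1 / s)) \<le> 1" for s :: real
  using ln_le_minus_one[of "1 / s"] mult_left_mono[of "1 + ln (1 / s)" "1 / s" s] by simp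

section \<open>The Borel-Caratheodory inequality\<close>

lemma norm_less_norm_reflection:
  fixes v :: complex
  assumes "0 < A" "Re v < A"
  shows "norm v < norm (2 * of_real A - v)"
proof -
  have "(Re v)\<^sup>2 < (2 * A - Re v)\<^sup>2"
    using assms by (simp add: power2_eq_square algebra_simps)
  then have "(norm v)\<^sup>2 < (norm (2 * of_real A - v))\<^sup>2"
    by (simp add: cmod_power2)
  then show ?thesis
    by (simp add: power_less_imp_less_base)
qed

lemma norm_Cayley_inverse_le:
  fixes w :: complex
  assumes "norm w \<le> r" "r < 1" "0 \<le> A"
  shows "norm (2 * of_real A * w / (1 + w)) \<le> 2 * A * r / (1 - r)"
proof -
  have "0 \<le> r"
    using norm_ge_zero[of w] assms(1) by linarith
  moreover have "1 - r \<le> norm (1 + w)"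
    using norm_triangle_ineq2[of 1 "- w"] assms(1) by simp
  ultimately have "2 * A * norm w / norm (1 + w) \<le> 2 * A * r / (1 - r)"
    using assms by (intro frac_le mult_left_mono) auto
  then show ?thesis
    using assms(3) by (simp add: norm_divide norm_mult)
qed

lemma Borel_Caratheodory:
  fixes h :: "complex \<Rightarrow> complex"
  assumes holo: "h holomorphic_on ball 0 R" and h0: "h 0 = 0"
    and Re_less: "\<And>z. z \<in> ball 0 R \<Longrightarrow> Re (h z) < A"
    and z: "norm z < R"
  shows "norm (h z) \<le> 2 * A * norm z / (R - norm z)"
proof -
  have R: "0 < R" using z norm_ge_zero[of z] by linarith
  have A: "0 < A" using Re_less[of 0] R h0 by simp
  have closer_to_0: "norm (h v) < norm (2 * of_real A - h v)" if "v \<in> ball 0 R" for v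
    using norm_less_norm_reflection[OF A Re_less[OF that]] .
  have den: "2 * of_real A - h v \<noteq> 0" if "v \<in> ball 0 R" for v
    using closer_to_0[OF that] by auto
  \<comment> \<open>The Cayley transform \<open>h / (2A - h)\<close> maps the half-plane \<open>Re < A\<close> into the unit disc.\<close>
  define w where "w u = h (of_real R * u) / (2 * of_real A - h (of_real R * u))" for u
  have inb: "of_real R * u \<in> ball 0 R" if "norm u < 1" for u :: complex
    using that R by (simp add: norm_mult)
  have holw: "w holomorphic_on ball 0 1"
    unfolding w_def
    by (intro holomorphic_intros holomorphic_on_compose_gen[OF _ holo, unfolded o_def])
      (use inb den in auto)
  have w_less: "norm (w u) < 1" if "norm u < 1" for u
    using closer_to_0[OF inb[OF that]] den[OF inb[OF that]]
    by (simp add: w_def norm_divide divide_less_eq)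
  define u where "u = z / of_real R"
  have u: "norm u = norm z / R" "norm u < 1"
    using R z by (simp_all add: u_def norm_divide divide_less_eq)
  have "norm (w u) \<le> norm u"
    using Schwarz_Lemma(1)[OF holw _ w_less u(2)] by (auto simp: w_def h0)
  then have "norm (2 * of_real A * w u / (1 + w u)) \<le> 2 * A * norm u / (1 - norm u)"
    using u A by (intro norm_Cayley_inverse_le) auto
  moreover have "h z = 2 * of_real A * w u / (1 + w u)"
  proof -
    have "1 + w u \<noteq> 0"
      using w_less[OF u(2)] by (metis add.inverse_unique norm_minus_cancel norm_one less_irrefl)
    then show ?thesis
      using den[of z] z R by (simp add: w_def u_def field_simps)
  qed
  moreover have "2 * A * norm u / (1 - norm u) = 2 * A * norm z / (R - norm z)"
    using R z by (simp add: u divide_simps)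
  ultimately show ?thesis
    by simp
qed

lemma nonvanishing_holomorphic_norm_diff_le:
  fixes k :: "complex \<Rightarrow> complex"
  assumes holo: "k holomorphic_on ball 0 R" and R: "0 < R"
    and nz: "\<And>z. z \<in> ball 0 R \<Longrightarrow> k z \<noteq> 0"
    and bd: "\<And>z. z \<in> ball 0 R \<Longrightarrow> norm (k z) \<le> M"
    and small: "4 * (ln (M / norm (k 0)) + 1) * norm z / R \<le> \<epsilon>" and \<epsilon>: "\<epsilon> \<le> 1"
  shows "norm (k z - k 0) \<le> 2 * \<epsilon> * norm (k 0)"
proof -
  have 0: "(0::complex) \<in> ball 0 R" using R by simp
  obtain l where holl: "l holomorphic_on ball 0 R" and exp_l: "\<And>x. x \<in> ball 0 R \<Longrightarrow> exp (l x) = k x"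
    using holomorphic_logarithm_exists[OF convex_ball open_ball holo nz 0] by blast
  have k0: "0 < norm (k 0)" using nz[OF 0] by simp
  have M: "0 < M" using bd[OF 0] k0 by linarith
  define A where "A = ln (M / norm (k 0)) + 1"
  have A: "1 \<le> A" using bd[OF 0] k0 by (simp add: A_def)
  have Re_l: "Re (l x) = ln (norm (k x))" if "x \<in> ball 0 R" for x
    using exp_l[OF that] by (metis ln_exp norm_exp_eq_Re)
  have Re_less: "Re (l x - l 0) < A" if x: "x \<in> ball 0 R" for x
  proof -
    have "Re (l x - l 0) \<le> ln M - ln (norm (k 0))"
      using ln_mono[OF bd[OF x]] nz[OF x] Re_l[OF x] Re_l[OF 0] by simp
    also have "\<dots> = ln (M / norm (k 0))"
      using M k0 by (simp add: ln_div)
    finally show ?thesis unfolding A_def by linarith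
  qed
  have "4 * norm z / R \<le> 4 * A * norm z / R"
    using A R by (simp add: divide_right_mono mult_right_mono)
  also have "\<dots> \<le> 1" using small \<epsilon> by (simp add: A_def)
  finally have z: "norm z \<le> R / 4" using R by (simp add: divide_simps)
  have "norm (l z - l 0) \<le> 2 * A * norm z / (R - norm z)"
    by (rule Borel_Caratheodory[OF _ _ Re_less]) (use holl z R in \<open>auto intro!: holomorphic_intros\<close>)
  also have "\<dots> \<le> 4 * A * norm z / R"
  proof -
    have "R * norm z \<le> 2 * (R - norm z) * norm z"
      using z R by (intro mult_right_mono) auto
    then show ?thesis
      using A z R by (simp add: divide_simps algebra_simps)
  qed
  finally have "norm (l z - l 0) \<le> \<epsilon>" using small A_def by simp
  then have "norm (exp (l z - l 0) - 1) \<le> 2 * \<epsilon>"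
    using norm_exp_minus_one_le_double[of "l z - l 0"] \<epsilon> by simp
  moreover have "k z - k 0 = k 0 * (exp (l z - l 0) - 1)"
    using exp_l[of z] exp_l[OF 0] nz[OF 0] z R by (simp add: exp_diff algebra_simps)
  ultimately show ?thesis
    using k0 by (simp add: norm_mult mult.commute mult_left_mono)
qed

section \<open>Holomorphic functions on the disc with at most one zero\<close>

lemma holomorphic_factor_unique_zero:
  fixes g :: "complex \<Rightarrow> complex"
  assumes holo: "g holomorphic_on S" and S: "open S" "connected S"
    and q0: "q0 \<in> S" "g q0 = 0" and zeros: "\<And>w. w \<in> S \<Longrightarrow> g w = 0 \<Longrightarrow> w = q0"
    and nonzero: "z \<in> S" "g z \<noteq> 0"
  obtains n k where "0 < n" "k holomorphic_on S" "\<And>w. w \<in> S \<Longrightarrow> k w \<noteq> 0"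
    "\<And>w. w \<in> S \<Longrightarrow> g w = (w - q0) ^ n * k w"
proof -
  have "\<not> g constant_on S"
    unfolding constant_on_def using q0 nonzero by metis
  then obtain h r n where n: "0 < n" and r: "0 < r" "ball q0 r \<subseteq> S"
    and holh: "h holomorphic_on ball q0 r"
    and g_eq: "\<And>w. w \<in> ball q0 r \<Longrightarrow> g w = (w - q0) ^ n * h w"
    and h_nz: "\<And>w. w \<in> ball q0 r \<Longrightarrow> h w \<noteq> 0"
    using holomorphic_factor_zero_nonconstant[OF holo S q0] by metis
  define k where "k w = (if w = q0 then h q0 else g w / (w - q0) ^ n)" for w
  have k_eq_h: "k w = h w" if "w \<in> ball q0 r" for w
    using g_eq[OF that] by (simp add: k_def)
  have "k holomorphic_on (S - {q0}) \<union> ball q0 r"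
  proof (rule holomorphic_on_Un)
    show "k holomorphic_on S - {q0}"
      by (rule holomorphic_transform[of "\<lambda>w. g w / (w - q0) ^ n"])
        (auto intro!: holomorphic_intros holomorphic_on_subset[OF holo] simp: k_def)
    show "k holomorphic_on ball q0 r"
      by (rule holomorphic_transform[OF holh]) (simp add: k_eq_h)
  qed (use S in auto)
  moreover have "(S - {q0}) \<union> ball q0 r = S" using r q0 by auto
  ultimately have "k holomorphic_on S" by simp
  moreover have "k w \<noteq> 0" if "w \<in> S" for w
    using h_nz[of q0] r zeros[OF that] by (cases "w = q0") (auto simp: k_def)
  moreover have "g w = (w - q0) ^ n * k w" if "w \<in> S" for w
    using q0 n by (simp add: k_def)
  ultimately show ?thesis using n that by blast
qed

lemma norm_cofactor_le_max_modulus: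
  fixes g k :: "complex \<Rightarrow> complex"
  assumes holk: "k holomorphic_on ball 0 1" and R: "0 < R" "R < 1"
    and g_eq: "\<And>w. w \<in> ball 0 1 \<Longrightarrow> g w = (w - q0) ^ n * k w"
    and bd: "\<And>w. norm w = R \<Longrightarrow> norm (g w) \<le> K"
    and q0: "norm q0 \<le> R / 2" and w: "w \<in> ball 0 R"
  shows "norm (k w) \<le> K * (2 / R) ^ n"
proof (rule maximum_modulus_frontier[of k "ball 0 R"])
  show "k holomorphic_on interior (ball 0 R)"
    using holk R by (auto intro: holomorphic_on_subset)
  show "continuous_on (closure (ball 0 R)) k"
    using R by (auto intro!: holomorphic_on_imp_continuous_on holomorphic_on_subset[OF holk])
next
  fix z :: complex assume "z \<in> frontier (ball 0 R)"
  then have z: "norm z = R" using R by (simp add: frontier_ball)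
  have dist: "R / 2 \<le> norm (z - q0)"
    using norm_triangle_ineq2[of z q0] z q0 by linarith
  have "norm (k z) = norm (g z) / norm (z - q0) ^ n"
  proof -
    have "z \<noteq> q0" using dist R by auto
    then show ?thesis using g_eq[of z] z R by (simp add: norm_mult norm_power)
  qed
  also have "\<dots> \<le> K / (R / 2) ^ n"
  proof -
    have "0 \<le> K" using bd[OF z] norm_ge_zero[of "g z"] by linarith
    then show ?thesis using bd[OF z] dist R by (intro frac_le power_mono) auto
  qed
  finally show "norm (k z) \<le> K * (2 / R) ^ n"
    by (simp add: power_divide)
qed (use w in auto)

lemma one_le_ln_inverse:
  fixes s :: real
  assumes "0 < s" "s \<le> 1/3"
  shows "1 \<le> ln (1 / s)"
proof -
  have "exp 1 * s \<le> 3 * s"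
    using exp_le assms by (intro mult_right_mono) auto
  then have "exp 1 * s \<le> 1"
    using assms by linarith
  then show ?thesis
    using assms by (simp add: ln_ge_iff field_simps)
qed

lemma norm_power_mult_diff_le:
  fixes q q0 a b :: complex
  assumes q0: "q0 \<noteq> 0" and ab: "norm (a - b) \<le> 2 * \<epsilon> * norm b"
    and n: "real n * norm q \<le> \<epsilon> * norm q0" and \<epsilon>: "\<epsilon> \<le> 1/2"
  shows "norm ((q - q0) ^ n * a - (- q0) ^ n * b) \<le> 6 * \<epsilon> * norm ((- q0) ^ n * b)"
proof (cases "b = 0")
  case True
  then show ?thesis using ab by simp
next
  case False
  have "real n * norm (- q / q0) \<le> \<epsilon>"
    using n q0 by (simp add: norm_divide divide_simps)
  then have "norm ((1 - q / q0) ^ n - 1) \<le> 2 * \<epsilon>"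
    using norm_one_plus_power_minus_one_le[of "- q / q0" n]
      exp_minus_one_le_double[of "real n * norm (- q / q0)"] \<epsilon>
    by simp
  moreover have "norm (a / b - 1) \<le> 2 * \<epsilon>"
  proof -
    have "a / b - 1 = (a - b) / b"
      using False by (simp add: field_simps)
    then show ?thesis
      using ab False by (simp add: norm_divide divide_le_eq)
  qed
  ultimately have close: "norm (a / b * (1 - q / q0) ^ n - 1) \<le> 3 * (2 * \<epsilon>)"
    using \<epsilon> by (intro norm_mult_minus_one_le) auto
  have "q - q0 = (- q0) * (1 - q / q0)"
    using q0 by (simp add: field_simps)
  then have "(q - q0) ^ n = (- q0) ^ n * (1 - q / q0) ^ n"
    by (simp only: power_mult_distrib)
  then have "(q - q0) ^ n * a - (- q0) ^ n * b = (- q0) ^ n * b * (a / b * (1 - q / q0) ^ n - 1)"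
    using False by (simp add: field_simps)
  then have "norm ((q - q0) ^ n * a - (- q0) ^ n * b)
      = norm ((- q0) ^ n * b) * norm (a / b * (1 - q / q0) ^ n - 1)"
    by (simp only: norm_mult)
  also have "\<dots> \<le> norm ((- q0) ^ n * b) * (3 * (2 * \<epsilon>))"
    using close by (rule mult_left_mono) simp
  finally show ?thesis
    by (simp add: mult.commute)
qed

locale disc_function_bounded_near_0 =
  fixes g :: "complex \<Rightarrow> complex" and K R \<alpha> :: real
  assumes holo: "g holomorphic_on ball 0 1"
    and R: "0 < R" "R \<le> 1/2"
    and K: "1 \<le> K" and bounded: "\<And>q. norm q \<le> R \<Longrightarrow> norm (g q) \<le> K"
    and at_0: "g 0 = of_real \<alpha>" and \<alpha>: "0 < \<alpha>" "\<alpha> < 1"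
begin

lemma one_le_ln_e_div_\<alpha>: "1 \<le> ln (exp 1 / \<alpha>)"
  using \<alpha> by (simp add: ln_div)

lemma ln_K_div_\<alpha>_le: "ln (K / \<alpha>) + 1 \<le> (ln K + 1) * ln (exp 1 / \<alpha>)"
proof -
  have "ln K \<le> ln K * ln (exp 1 / \<alpha>)"
    using K one_le_ln_e_div_\<alpha> mult_left_mono[of 1 "ln (exp 1 / \<alpha>)" "ln K"] by simp
  then show ?thesis
    using K \<alpha> by (simp add: ln_div algebra_simps)
qed

lemma zero_free_estimate:
  assumes zero_free: "\<And>w. norm w < \<rho> \<Longrightarrow> g w \<noteq> 0" and \<rho>: "0 < \<rho>" "\<rho> \<le> R"
    and small: "4 * (ln K + 1) * ln (exp 1 / \<alpha>) * norm q \<le> \<epsilon> * \<rho>" and \<epsilon>: "\<epsilon> \<le> 1"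
  shows "norm (g q - \<alpha>) \<le> 2 * \<epsilon> * \<alpha>"
proof -
  have "norm (g q - g 0) \<le> 2 * \<epsilon> * norm (g 0)"
  proof (rule nonvanishing_holomorphic_norm_diff_le[OF _ \<rho>(1) _ _ _ \<epsilon>])
    show "g holomorphic_on ball 0 \<rho>"
      using holo \<rho> R by (auto intro: holomorphic_on_subset)
    show "norm (g w) \<le> K" if "w \<in> ball 0 \<rho>" for w
      using bounded that \<rho> by simp
    have "(ln (K / \<alpha>) + 1) * norm q \<le> (ln K + 1) * ln (exp 1 / \<alpha>) * norm q"
      using ln_K_div_\<alpha>_le by (rule mult_right_mono) simp
    then have "4 * (ln (K / \<alpha>) + 1) * norm q \<le> \<epsilon> * \<rho>"
      using small by linarith
    then show "4 * (ln (K / norm (g 0)) + 1) * norm q / \<rho> \<le> \<epsilon>"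
      using \<rho> at_0 \<alpha> by (simp add: divide_simps)
  qed (use zero_free in auto)
  then show ?thesis using at_0 \<alpha> by simp
qed

lemma order_of_zero_bound:
  assumes s: "0 < s" "s \<le> (R / 2)\<^sup>2" and "\<alpha> \<le> K * (2 * s / R) ^ n"
  shows "real n * ln (1 / s) \<le> 2 * ln (K / \<alpha>)"
proof -
  have "(R / (2 * s)) ^ n \<le> K / \<alpha>"
    using assms R \<alpha> by (simp add: field_simps power_divide power_mult_distrib)
  from ln_mono[OF this] have ln_ratio: "real n * ln (R / (2 * s)) \<le> ln (K / \<alpha>)"
    using R s by (simp add: ln_realpow)
  have "1 / s \<le> (R / (2 * s))\<^sup>2"
    using s by (simp add: power_divide power_mult_distrib divide_simps power2_eq_square)
  from ln_mono[OF this] have "ln (1 / s) \<le> 2 * ln (R / (2 * s))"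
    using s R by (simp add: ln_realpow)
  then have "real n * ln (1 / s) \<le> real n * (2 * ln (R / (2 * s)))"
    by (rule mult_left_mono) simp
  with ln_ratio show ?thesis
    by linarith
qed

lemma factor_at_single_zero:
  assumes zeros: "\<And>w. norm w < 1 \<Longrightarrow> g w = 0 \<Longrightarrow> w = q0" and "g q0 = 0"
    and s: "0 < norm q0" "norm q0 \<le> (R / 2)\<^sup>2"
  obtains n k where "0 < n" "\<And>w. w \<in> ball 0 1 \<Longrightarrow> g w = (w - q0) ^ n * k w"
    "k holomorphic_on ball 0 1" "\<And>w. w \<in> ball 0 1 \<Longrightarrow> k w \<noteq> 0"
    "\<And>w. w \<in> ball 0 R \<Longrightarrow> norm (k w) \<le> K * (2 / R) ^ n"
    "real n * ln (1 / norm q0) \<le> 2 * ln (K / \<alpha>)"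
proof -
  have "(R / 2)\<^sup>2 \<le> R / 2 * (1 / 4)"
    using R by (simp add: power2_eq_square mult_left_mono)
  then have s_le: "norm q0 \<le> R / 8"
    using s R by simp
  have q0_in: "q0 \<in> ball 0 1"
    using s_le R by simp
  have zeros': "w = q0" if "w \<in> ball 0 1" "g w = 0" for w
    using zeros that by simp
  have origin: "0 \<in> ball (0::complex) 1" "g 0 \<noteq> 0"
    using at_0 \<alpha> by auto
  obtain n k where n: "0 < n" and holk: "k holomorphic_on ball 0 1"
    and k_nz: "\<And>w. w \<in> ball 0 1 \<Longrightarrow> k w \<noteq> 0"
    and g_eq: "\<And>w. w \<in> ball 0 1 \<Longrightarrow> g w = (w - q0) ^ n * k w"
    using holomorphic_factor_unique_zero[OF holo open_ball connected_ball q0_in \<open>g q0 = 0\<close> zeros' origin]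
    by blast
  have k_bound: "norm (k w) \<le> K * (2 / R) ^ n" if "w \<in> ball 0 R" for w
    by (rule norm_cofactor_le_max_modulus[OF holk _ _ g_eq _ _ that]) (use R bounded s_le in auto)
  \<comment> \<open>The zero cannot have high order: \<open>\<alpha> = \<bar>q0\<bar>\<^sup>n \<bar>k 0\<bar>\<close>, and \<open>\<bar>k 0\<bar>\<close> is bounded by the maximum principle.\<close>
  have "norm (of_real \<alpha> :: complex) = norm q0 ^ n * norm (k 0)"
    using g_eq[of 0] at_0 by (simp add: norm_mult norm_power)
  then have "\<alpha> \<le> K * (2 * norm q0 / R) ^ n"
    using k_bound[of 0] R s \<alpha> by (simp add: field_simps power_divide power_mult_distrib)
  then have "real n * ln (1 / norm q0) \<le> 2 * ln (K / \<alpha>)"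
    by (rule order_of_zero_bound[OF s])
  with n g_eq holk k_nz k_bound show ?thesis
    by (rule that)
qed

lemma cofactor_estimate:
  assumes holk: "k holomorphic_on ball 0 R" and k_nz: "\<And>w. w \<in> ball 0 R \<Longrightarrow> k w \<noteq> 0"
    and k_bound: "\<And>w. w \<in> ball 0 R \<Longrightarrow> norm (k w) \<le> K * (2 / R) ^ n"
    and k0: "norm (k 0) = \<alpha> / s ^ n" and s: "0 < s" "s \<le> R / 2"
    and small: "4 * (ln K + 1) * ln (exp 1 / \<alpha>) * norm q \<le> \<epsilon> * R" and \<epsilon>: "\<epsilon> \<le> 1"
  shows "norm (k q - k 0) \<le> 2 * \<epsilon> * norm (k 0)"
proof (rule nonvanishing_holomorphic_norm_diff_le[OF holk R(1) k_nz k_bound _ \<epsilon>])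
  have "K * (2 / R) ^ n / norm (k 0) = K / \<alpha> * (2 * s / R) ^ n"
    using \<alpha> s by (simp add: k0 field_simps power_divide power_mult_distrib)
  also have "\<dots> \<le> K / \<alpha>"
    using K \<alpha> R s by (intro mult_left_le power_le_one) auto
  finally have "ln (K * (2 / R) ^ n / norm (k 0)) \<le> ln (K / \<alpha>)"
    by (rule ln_mono) (use K R \<alpha> s in \<open>simp add: k0\<close>)
  then have "(ln (K * (2 / R) ^ n / norm (k 0)) + 1) * norm q \<le> (ln K + 1) * ln (exp 1 / \<alpha>) * norm q"
    using ln_K_div_\<alpha>_le by (intro mult_right_mono) auto
  then have "4 * (ln (K * (2 / R) ^ n / norm (k 0)) + 1) * norm q \<le> \<epsilon> * R"
    using small by linarith
  then show "4 * (ln (K * (2 / R) ^ n / norm (k 0)) + 1) * norm q / R \<le> \<epsilon>"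
    using R by (simp add: divide_simps)
qed

lemma order_mult_norm_le:
  assumes order: "real n * ln (1 / s) \<le> 2 * ln (K / \<alpha>)"
    and small: "2 * (ln K + 1) * ln (exp 1 / \<alpha>) * norm q \<le> \<epsilon> * s * ln (1 / s)"
    and s: "0 < s" "s \<le> 1/3"
  shows "real n * norm q \<le> \<epsilon> * s"
proof -
  have "ln (K / \<alpha>) * norm q \<le> (ln K + 1) * ln (exp 1 / \<alpha>) * norm q"
    using ln_K_div_\<alpha>_le by (intro mult_right_mono) auto
  then have "2 * ln (K / \<alpha>) * norm q \<le> \<epsilon> * s * ln (1 / s)"
    using small by linarith
  moreover have "real n * ln (1 / s) * norm q \<le> 2 * ln (K / \<alpha>) * norm q"
    using order by (intro mult_right_mono) auto
  ultimately have "(real n * norm q) * ln (1 / s) \<le> (\<epsilon> * s) * ln (1 / s)"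
    by (simp add: ac_simps)
  then show ?thesis
    using one_le_ln_inverse[OF s] by (elim mult_right_le_imp_le) simp
qed

lemma single_zero_estimate:
  assumes zeros: "\<And>w. norm w < 1 \<Longrightarrow> g w = 0 \<Longrightarrow> w = q0" and "g q0 = 0"
    and s: "0 < norm q0" "norm q0 \<le> (R / 2)\<^sup>2"
    and small: "4 * (ln K + 1) * ln (exp 1 / \<alpha>) * norm q \<le> \<epsilon> * R"
    and small_rel: "2 * (ln K + 1) * ln (exp 1 / \<alpha>) * norm q \<le> \<epsilon> * norm q0 * ln (1 / norm q0)"
    and \<epsilon>: "\<epsilon> \<le> 1/2"
  shows "norm (g q - \<alpha>) \<le> 6 * \<epsilon> * \<alpha>"
proof -
  obtain n k where n: "0 < n" and g_eq: "\<And>w. w \<in> ball 0 1 \<Longrightarrow> g w = (w - q0) ^ n * k w"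
    and holk: "k holomorphic_on ball 0 1" and k_nz: "\<And>w. w \<in> ball 0 1 \<Longrightarrow> k w \<noteq> 0"
    and k_bound: "\<And>w. w \<in> ball 0 R \<Longrightarrow> norm (k w) \<le> K * (2 / R) ^ n"
    and order: "real n * ln (1 / norm q0) \<le> 2 * ln (K / \<alpha>)"
    using factor_at_single_zero[OF zeros \<open>g q0 = 0\<close> s] by blast
  have "(R / 2)\<^sup>2 \<le> R / 2 * (1 / 4)"
    using R by (simp add: power2_eq_square mult_left_mono)
  then have s_le: "norm q0 \<le> R / 2" "norm q0 \<le> 1/3"
    using s R by simp_all
  have g0: "of_real \<alpha> = (- q0) ^ n * k 0"
    using g_eq[of 0] at_0 by simp
  have "\<alpha> = norm (of_real \<alpha> :: complex)"
    using \<alpha> by simp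
  also have "\<dots> = norm (k 0) * norm q0 ^ n"
    by (simp only: g0 norm_mult norm_power norm_minus_cancel mult.commute)
  finally have k0: "norm (k 0) = \<alpha> / norm q0 ^ n"
    using s by (simp add: field_simps)
  have k_close: "norm (k q - k 0) \<le> 2 * \<epsilon> * norm (k 0)"
    by (rule cofactor_estimate[where k = k, OF _ _ k_bound k0 s(1) s_le(1) small])
      (use holk k_nz R \<epsilon> in \<open>auto intro: holomorphic_on_subset\<close>)
  have n_q: "real n * norm q \<le> \<epsilon> * norm q0"
    using order_mult_norm_le[OF order small_rel s(1) s_le(2)] .
  moreover have "\<epsilon> * norm q0 \<le> 1 * norm q0"
    using \<epsilon> by (intro mult_right_mono) auto
  ultimately have "norm q \<le> norm q0"
    using n mult_right_mono[of 1 "real n" "norm q"] by simp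
  then have "g q = (q - q0) ^ n * k q"
    using g_eq s_le by simp
  moreover have "norm ((q - q0) ^ n * k q - (- q0) ^ n * k 0) \<le> 6 * \<epsilon> * norm ((- q0) ^ n * k 0)"
    using norm_power_mult_diff_le[OF _ k_close n_q \<epsilon>] s by simp
  ultimately have "norm (g q - of_real \<alpha>) \<le> 6 * \<epsilon> * norm (of_real \<alpha> :: complex)"
    by (simp only: g0)
  then show ?thesis
    using \<alpha> by simp
qed

lemma single_zero_estimate_near_0:
  assumes zeros: "\<And>w. norm w < 1 \<Longrightarrow> g w = 0 \<Longrightarrow> w = q0" and "g q0 = 0"
    and s: "0 < norm q0" "norm q0 \<le> (R / 2)\<^sup>2" and \<delta>: "0 < \<delta>" "\<delta> \<le> 3"
    and q: "(ln K + 1) * ln (exp 1 / \<alpha>) * norm q \<le> \<delta> * R\<^sup>2 / 96 * (norm q0 * (1 + ln (1 / norm q0)))"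
  shows "norm (g q - \<alpha>) \<le> \<delta> * \<alpha>"
proof -
  define s where "s = norm q0"
  have R_sq: "R\<^sup>2 \<le> R" "R \<le> 1" "(R / 2)\<^sup>2 \<le> 1/3"
    using R power_mono[of "R / 2" "1 / 4" 2] by (auto simp: power2_eq_square mult_left_le_one_le)
  have ln_s: "1 \<le> ln (1 / s)"
    using one_le_ln_inverse[of s] s R_sq by (simp add: s_def)
  have s_ln: "0 \<le> s * (1 + ln (1 / s))" "s * (1 + ln (1 / s)) \<le> 1"
      "s * (1 + ln (1 / s)) \<le> 2 * (s * ln (1 / s))"
    using s ln_s mult_one_plus_ln_inverse_le_one[of s] mult_left_mono[of 1 "ln (1 / s)" s]
    by (simp add: s_def, simp add: s_def, simp add: s_def distrib_left)
  have "norm (g q - \<alpha>) \<le> 6 * (\<delta> / 6) * \<alpha>"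
  proof (rule single_zero_estimate[OF zeros \<open>g q0 = 0\<close> s])
    have "\<delta> * R\<^sup>2 / 96 * (s * (1 + ln (1 / s))) \<le> \<delta> * R / 96 * 1"
      using R R_sq \<delta> s_ln by (intro mult_mono) (auto simp: mult_left_mono)
    then show "4 * (ln K + 1) * ln (exp 1 / \<alpha>) * norm q \<le> \<delta> / 6 * R"
      using q R \<delta> mult_pos_pos[of \<delta> R] unfolding s_def by linarith
    have "\<delta> * R\<^sup>2 / 96 \<le> \<delta> / 96"
      using R_sq \<delta> mult_left_le[of "R\<^sup>2" \<delta>] by simp
    from mult_mono[OF this s_ln(3) _ s_ln(1)]
    have "\<delta> * R\<^sup>2 / 96 * (s * (1 + ln (1 / s))) \<le> \<delta> / 96 * (2 * (s * ln (1 / s)))"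
      using \<delta> by simp
    then show "2 * (ln K + 1) * ln (exp 1 / \<alpha>) * norm q \<le> \<delta> / 6 * norm q0 * ln (1 / norm q0)"
      using q \<delta> s_ln mult_nonneg_nonneg[of \<delta> "s * ln (1 / s)"] unfolding s_def by linarith
  qed (use \<delta> in auto)
  then show ?thesis by simp
qed

lemma zero_free_estimate_near_0:
  assumes zero_free: "\<And>w. norm w < (R / 2)\<^sup>2 \<Longrightarrow> g w \<noteq> 0" and \<delta>: "0 < \<delta>" "\<delta> \<le> 3"
    and s: "0 < s" and q: "(ln K + 1) * ln (exp 1 / \<alpha>) * norm q \<le> \<delta> * R\<^sup>2 / 96 * (s * (1 + ln (1 / s)))"
  shows "norm (g q - \<alpha>) \<le> \<delta> * \<alpha>"
proof -
  have "\<delta> * R\<^sup>2 / 96 * (s * (1 + ln (1 / s))) \<le> \<delta> * R\<^sup>2 / 96"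
    using mult_one_plus_ln_inverse_le_one[OF s] \<delta> by (intro mult_left_le) auto
  with q have P_small: "(ln K + 1) * ln (exp 1 / \<alpha>) * norm q \<le> \<delta> * R\<^sup>2 / 96"
    by linarith
  have "norm (g q - \<alpha>) \<le> 2 * (\<delta> / 6) * \<alpha>"
  proof (rule zero_free_estimate[OF zero_free])
    show "(R / 2)\<^sup>2 \<le> R"
      using R mult_left_le_one_le[of R "R / 4"] by (simp add: power2_eq_square)
    have "\<delta> / 6 * (R / 2)\<^sup>2 = 4 * (\<delta> * R\<^sup>2 / 96)"
      by (simp add: power_divide)
    then show "4 * (ln K + 1) * ln (exp 1 / \<alpha>) * norm q \<le> \<delta> / 6 * (R / 2)\<^sup>2"
      using P_small by linarith
  qed (use R \<delta> in auto)
  then show ?thesis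
    using \<alpha> \<delta> mult_pos_pos[of \<delta> \<alpha>] by linarith
qed

lemma norm_diff_le_of_at_most_one_zero:
  assumes zeros: "\<And>w. norm w < 1 \<Longrightarrow> g w = 0 \<Longrightarrow> w = q0" and q0: "0 < norm q0"
    and \<delta>: "0 < \<delta>" "\<delta> \<le> 3"
    and q: "norm q \<le> \<delta> * R\<^sup>2 / (96 * (ln K + 1)) * norm q0 * (1 + ln (1 / norm q0)) / ln (exp 1 / \<alpha>)"
  shows "norm (g q - \<alpha>) \<le> \<delta> * \<alpha>"
proof -
  define s where "s = norm q0"
  have pos: "0 < ln (exp 1 / \<alpha>)" "0 < ln K + 1"
    using one_le_ln_e_div_\<alpha> K by (auto intro: add_nonneg_pos)
  then have "ln (exp 1 / \<alpha>) * norm q \<le> \<delta> * R\<^sup>2 / (96 * (ln K + 1)) * s * (1 + ln (1 / s))"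
    using q by (simp add: s_def pos_le_divide_eq mult.commute)
  from mult_left_mono[OF this, of "ln K + 1"]
  have "(ln K + 1) * ln (exp 1 / \<alpha>) * norm q
      \<le> (ln K + 1) * (\<delta> * R\<^sup>2 / (96 * (ln K + 1)) * s * (1 + ln (1 / s)))"
    using pos(2) by (simp add: mult.assoc)
  also have "\<dots> = \<delta> * R\<^sup>2 / 96 * (s * (1 + ln (1 / s)))"
    using pos(2) by (simp add: field_simps)
  finally have q': "(ln K + 1) * ln (exp 1 / \<alpha>) * norm q \<le> \<delta> * R\<^sup>2 / 96 * (s * (1 + ln (1 / s)))" .
  show ?thesis
  proof (cases "g q0 = 0 \<and> s \<le> (R / 2)\<^sup>2")
    case True
    then show ?thesis
      using single_zero_estimate_near_0[OF zeros _ q0 _ \<delta>] q' by (simp add: s_def)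
  next
    case False
    have "g w \<noteq> 0" if "norm w < (R / 2)\<^sup>2" for w
    proof
      assume "g w = 0"
      moreover have "(R / 2)\<^sup>2 \<le> 1"
        using R by (intro power_le_one) auto
      ultimately show False
        using zeros[of w] False that by (auto simp: s_def)
    qed
    then show ?thesis
      using zero_free_estimate_near_0[OF _ \<delta> _ q'] q0 by (simp add: s_def)
  qed
qed

end

section \<open>The coordinate \<open>q = exp (2 \<pi> i Z)\<close>\<close>

definition qexp :: "complex \<Rightarrow> complex" where
  "qexp Z = exp (2 * of_real pi * \<i> * Z)"

definition qlog :: "complex \<Rightarrow> complex" where
  "qlog q = Ln q / (2 * of_real pi * \<i>)"

lemma norm_qexp: "norm (qexp Z) = exp (- 2 * pi * Im Z)"
  by (simp add: qexp_def)

lemma qexp_nonzero: "qexp Z \<noteq> 0"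
  by (simp add: qexp_def)

lemma qexp_eq_iff: "qexp Z1 = qexp Z2 \<longleftrightarrow> (\<exists>n::int. Z1 = Z2 + of_int n)"
proof -
  have "2 * of_real pi * \<i> * Z1 = 2 * of_real pi * \<i> * Z2 + of_int (2 * n) * of_real pi * \<i>
      \<longleftrightarrow> Z1 = Z2 + of_int n" for n :: int
  proof -
    have "2 * of_real pi * \<i> * Z1 = 2 * of_real pi * \<i> * Z2 + of_int (2 * n) * of_real pi * \<i>
        \<longleftrightarrow> (2 * of_real pi * \<i>) * Z1 = (2 * of_real pi * \<i>) * (Z2 + of_int n)"
      by (simp add: algebra_simps)
    also have "\<dots> \<longleftrightarrow> Z1 = Z2 + of_int n"
      by (subst mult_cancel_left) simp
    finally show ?thesis .
  qed
  then show ?thesis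
    by (simp add: qexp_def exp_eq)
qed

lemma qexp_add_of_int: "qexp (Z + of_int n) = qexp Z"
  using qexp_eq_iff by blast

lemma qexp_qlog: "q \<noteq> 0 \<Longrightarrow> qexp (qlog q) = q"
  by (simp add: qexp_def qlog_def)

lemma Im_qlog:
  assumes "q \<noteq> 0"
  shows "Im (qlog q) = - ln (norm q) / (2 * pi)"
proof -
  have "qlog q = - \<i> * Ln q / (2 * of_real pi)"
    by (simp add: qlog_def field_simps)
  then show ?thesis
    using assms by (simp add: Im_divide_of_real)
qed

lemma qlog_in_upper_half_plane: "q \<noteq> 0 \<Longrightarrow> norm q < 1 \<Longrightarrow> qlog q \<in> upper_half_plane"
  by (simp add: Im_qlog upper_half_plane_def divide_neg_pos)

lemma S_class_add_of_int:
  assumes F: "F \<in> S_class \<alpha>" and Z: "Z \<in> upper_half_plane"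
  shows "F (Z + of_int n) = F Z + of_int n"
proof -
  have shift: "W + of_int m \<in> upper_half_plane" if "W \<in> upper_half_plane" for W m
    using that by (simp add: upper_half_plane_def)
  have nat: "F (W + of_nat m) = F W + of_nat m" if W: "W \<in> upper_half_plane" for W m
  proof (induction m)
    case (Suc m)
    have "W + of_nat m \<in> upper_half_plane"
      using shift[OF W, of "int m"] by simp
    then have "F (W + of_nat m + 1) = F (W + of_nat m) + 1"
      using F by (simp add: S_class_def)
    then show ?case
      using Suc by (simp add: algebra_simps)
  qed simp
  show ?thesis
  proof (cases "0 \<le> n")
    case True
    then show ?thesis using nat[OF Z, of "nat n"] by simp
  next
    case False
    then have "Z + of_int n + of_nat (nat (- n)) = Z"
      by simp
    then have "F Z = F (Z + of_int n) + of_nat (nat (- n))"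
      using nat[OF shift[OF Z], of n "nat (- n)"] by (simp only:)
    then show ?thesis
      using False by simp
  qed
qed

text \<open>\<open>F Z - Z\<close> as a function of \<open>q = qexp Z\<close>; periodicity makes the choice of \<open>qlog\<close>
  irrelevant, and the removable singularity at \<open>q = 0\<close> is filled with the limit \<open>\<alpha>\<close>.\<close>

definition q_displacement :: "(complex \<Rightarrow> complex) \<Rightarrow> real \<Rightarrow> complex \<Rightarrow> complex" where
  "q_displacement F \<alpha> q = (if q = 0 then of_real \<alpha> else F (qlog q) - qlog q)"

lemma q_displacement_qexp:
  assumes F: "F \<in> S_class \<alpha>" and Z: "Z \<in> upper_half_plane"
  shows "q_displacement F \<alpha> (qexp Z) = F Z - Z"
proof -
  obtain n :: int where n: "qlog (qexp Z) = Z + of_int n"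
    using qexp_eq_iff qexp_qlog[OF qexp_nonzero] by blast
  then show ?thesis
    using S_class_add_of_int[OF F Z, of n] qexp_nonzero by (simp add: q_displacement_def)
qed

lemma q_displacement_holomorphic_on_branch:
  assumes F: "F \<in> S_class \<alpha>" and holb: "b holomorphic_on S" and b: "b ` S \<subseteq> upper_half_plane"
    and qexp_b: "\<And>q. q \<in> S \<Longrightarrow> qexp (b q) = q"
  shows "q_displacement F \<alpha> holomorphic_on S"
proof (rule holomorphic_transform[of "\<lambda>q. F (b q) - b q"])
  have "F holomorphic_on upper_half_plane"
    using F by (simp add: S_class_def)
  then show "(\<lambda>q. F (b q) - b q) holomorphic_on S"
    using b by (intro holomorphic_intros holomorphic_on_compose_gen[OF holb, unfolded o_def] holb) auto
  show "F (b q) - b q = q_displacement F \<alpha> q" if "q \<in> S" for q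
    using q_displacement_qexp[OF F, of "b q"] qexp_b[OF that] b that by auto
qed

lemma q_displacement_holomorphic_punctured:
  assumes F: "F \<in> S_class \<alpha>"
  shows "q_displacement F \<alpha> holomorphic_on ball 0 1 - {0}"
proof -
  \<comment> \<open>Two branches of \<open>qlog\<close>, cut along the negative and the positive real axis.\<close>
  define S1 where "S1 = ball (0::complex) 1 - {0} - \<real>\<^sub>\<le>\<^sub>0"
  define S2 where "S2 = ball (0::complex) 1 - {0} - uminus ` \<real>\<^sub>\<le>\<^sub>0"
  have open_S: "open S1" "open S2"
    unfolding S1_def S2_def
    by (auto intro!: open_Diff closed_negations[OF closed_nonpos_Reals_complex])
  have "q_displacement F \<alpha> holomorphic_on S1"
  proof (rule q_displacement_holomorphic_on_branch[OF F])
    show "qlog holomorphic_on S1"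
      unfolding qlog_def S1_def by (intro holomorphic_intros) auto
  qed (auto simp: S1_def intro!: qlog_in_upper_half_plane qexp_qlog)
  moreover have "q_displacement F \<alpha> holomorphic_on S2"
  proof (rule q_displacement_holomorphic_on_branch[OF F, of "\<lambda>q. qlog (- q) + 1/2"])
    show "(\<lambda>q. qlog (- q) + 1/2) holomorphic_on S2"
      unfolding qlog_def by (intro holomorphic_intros) (metis S2_def Diff_iff image_eqI minus_minus, simp)
    show "(\<lambda>q. qlog (- q) + 1/2) ` S2 \<subseteq> upper_half_plane"
      using qlog_in_upper_half_plane[of "- _"] by (auto simp: S2_def upper_half_plane_def)
    show "qexp (qlog (- q) + 1/2) = q" if "q \<in> S2" for q
    proof -
      have "qexp (qlog (- q) + 1/2) = qexp (qlog (- q)) * exp (of_real pi * \<i>)"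
        by (simp add: qexp_def distrib_left exp_add mult.commute mult.left_commute)
      then show ?thesis
        using that by (simp add: qexp_qlog S2_def)
    qed
  qed
  moreover have "ball 0 1 - {0} = S1 \<union> S2"
    by (auto simp: S1_def S2_def complex_nonpos_Reals_iff complex_eq_iff)
  ultimately show ?thesis
    using holomorphic_on_Un[OF _ _ open_S] by metis
qed

lemma q_displacement_tendsto:
  assumes F: "F \<in> S_class \<alpha>"
  shows "(q_displacement F \<alpha> \<longlongrightarrow> of_real \<alpha>) (at 0)"
proof (rule tendstoI)
  fix e :: real assume e: "0 < e"
  have "((\<lambda>z. F z - z) \<longlongrightarrow> of_real \<alpha>) (filtercomap Im at_top)"
    using F by (simp add: S_class_def)
  from tendstoD[OF this e] obtain b
    where b: "\<And>z. b \<le> Im z \<Longrightarrow> dist (F z - z) (of_real \<alpha>) < e"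
    unfolding eventually_filtercomap eventually_at_top_linorder by blast
  define d where "d = exp (- 2 * pi * b)"
  have close: "dist (q_displacement F \<alpha> q) (of_real \<alpha>) < e" if "q \<noteq> 0" "norm q < d" for q
  proof -
    have "ln (norm q) < - 2 * pi * b"
      using that ln_less_cancel_iff[of "norm q" d] by (simp add: d_def)
    then have "b \<le> Im (qlog q)"
      using that by (simp add: Im_qlog field_simps)
    then show ?thesis
      using b that by (simp add: q_displacement_def)
  qed
  show "eventually (\<lambda>q. dist (q_displacement F \<alpha> q) (of_real \<alpha>) < e) (at 0)"
    unfolding eventually_at using close by (intro exI[of _ d]) (auto simp: d_def)
qed

lemma q_displacement_holomorphic:
  assumes F: "F \<in> S_class \<alpha>"
  shows "q_displacement F \<alpha> holomorphic_on ball 0 1"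
proof (rule no_isolated_singularity'[of "{0}"])
  show "(q_displacement F \<alpha> \<longlongrightarrow> q_displacement F \<alpha> z) (at z within ball 0 1)" if "z \<in> {0}" for z
    using q_displacement_tendsto[OF F] that
    by (auto simp: q_displacement_def intro: tendsto_within_subset)
qed (use q_displacement_holomorphic_punctured[OF F] in auto)

section \<open>Univalent maps of the disc\<close>

lemma univalent_omits_value_in_ball_2:
  fixes f :: "complex \<Rightarrow> complex"
  assumes holf: "f holomorphic_on ball 0 1" and inj: "inj_on f (ball 0 1)"
    and f0: "f 0 = 0" and df: "norm (deriv f 0) = 1"
  obtains w where "w \<notin> f ` ball 0 1" "norm w < 2"
proof (rule ccontr)
  assume "\<not> thesis"
  have sub: "ball 0 2 \<subseteq> f ` ball 0 1"
  proof
    fix w :: complex assume "w \<in> ball 0 2"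
    then show "w \<in> f ` ball 0 1" using that \<open>\<not> thesis\<close> by auto
  qed
  obtain f_inv where hol_inv: "f_inv holomorphic_on f ` ball 0 1"
    and d_inv: "\<And>z. z \<in> ball 0 1 \<Longrightarrow> deriv f z * deriv f_inv (f z) = 1"
    and inv_f: "\<And>z. z \<in> ball 0 1 \<Longrightarrow> f_inv (f z) = z"
    using holomorphic_has_inverse[OF holf open_ball inj] by metis
  \<comment> \<open>Schwarz's lemma for \<open>w \<mapsto> f\<^sup>-\<^sup>1 (2 w)\<close> contradicts \<open>\<bar>(f\<^sup>-\<^sup>1)' 0\<bar> = 1\<close>.\<close>
  define h where "h w = f_inv (2 * w)" for w
  have holh: "h holomorphic_on ball 0 1" unfolding h_def
    by (rule holomorphic_on_compose_gen[OF _ hol_inv, unfolded o_def])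
      (auto intro!: holomorphic_intros sub[THEN subsetD] simp: norm_mult)
  have h0: "h 0 = 0" using inv_f[of 0] f0 by (simp add: h_def)
  have h_less: "norm (h w) < 1" if "norm w < 1" for w
  proof -
    have "2 * w \<in> f ` ball 0 1" using sub that by (auto simp: norm_mult)
    then show ?thesis using inv_f by (auto simp: h_def)
  qed
  have "open (f ` ball 0 1)" by (rule open_mapping_thm3[OF holf open_ball inj])
  moreover have "0 \<in> f ` ball 0 1" using f0 by force
  ultimately have "(f_inv has_field_derivative deriv f_inv 0) (at 0)"
    using hol_inv by (intro DERIV_deriv_iff_field_differentiable[THEN iffD2]
        holomorphic_on_imp_differentiable_at)
  then have "(h has_field_derivative deriv f_inv 0 * 2) (at 0)"
    unfolding h_def using DERIV_chain2[of f_inv "deriv f_inv 0" "\<lambda>w. 2 * w" 0 2]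
    by (auto intro!: derivative_eq_intros)
  then have "deriv h 0 = deriv f_inv 0 * 2" by (rule DERIV_imp_deriv)
  moreover have "norm (deriv f_inv 0) = 1"
  proof -
    have "deriv f 0 * deriv f_inv 0 = 1"
      using d_inv[of 0] f0 by simp
    then have "norm (deriv f 0) * norm (deriv f_inv 0) = 1"
      by (metis norm_mult norm_one)
    then show ?thesis using df by simp
  qed
  ultimately have "norm (deriv h 0) = 2" by (simp add: norm_mult)
  then show False using Schwarz_Lemma(2)[OF holh h0 h_less, of 0] by simp
qed

lemma simply_connected_complement_meets_circle:
  fixes \<Omega> :: "complex set"
  assumes "open \<Omega>" "simply_connected \<Omega>" "w \<notin> \<Omega>" "norm w \<le> r"
  obtains v where "v \<notin> \<Omega>" "norm v = r"
proof -
  define C where "C = connected_component_set (- \<Omega>) w"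
  have "C \<in> components (- \<Omega>)"
    unfolding C_def using assms(3) by (intro componentsI) simp
  then have "\<not> bounded C"
    using simply_connected_eq_unbounded_complement_components assms(1,2) by blast
  then obtain x where x: "x \<in> C" "r < norm x"
    unfolding bounded_iff by (meson not_le)
  have "connected (norm ` C)"
    by (intro connected_continuous_image continuous_intros) (simp add: C_def)
  moreover have "norm w \<in> norm ` C" "norm x \<in> norm ` C"
    using assms(3) x by (auto simp: C_def)
  ultimately have "{norm w..norm x} \<subseteq> norm ` C"
    by (rule connected_contains_Icc)
  then have "r \<in> norm ` C"
    using assms(4) x by auto
  moreover have "C \<subseteq> - \<Omega>"
    unfolding C_def by (rule connected_component_subset)
  ultimately show ?thesis using that by blast
qed

lemma simply_connected_univalent_image:
  fixes f :: "complex \<Rightarrow> complex"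
  assumes holf: "f holomorphic_on S" and "open S" "simply_connected S" and inj: "inj_on f S"
  shows "simply_connected (f ` S)"
proof -
  obtain f_inv where "f_inv holomorphic_on f ` S" and "\<And>z. z \<in> S \<Longrightarrow> f_inv (f z) = z"
    using holomorphic_has_inverse[OF holf \<open>open S\<close> inj] by metis
  then have "homeomorphism S (f ` S) f f_inv"
    unfolding homeomorphism_def
    using holomorphic_on_imp_continuous_on[OF holf] holomorphic_on_imp_continuous_on
    by (auto simp: image_iff)
  then show ?thesis
    using \<open>simply_connected S\<close> homeomorphic_def homeomorphic_simply_connected by blast
qed

lemma univalent_bound_on_ball_quarter:
  fixes f :: "complex \<Rightarrow> complex"
  assumes holf: "f holomorphic_on ball 0 1" and inj: "inj_on f (ball 0 1)"
    and f0: "f 0 = 0" and df: "norm (deriv f 0) = 1" and q: "norm q \<le> 1/4"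
  shows "norm (f q) \<le> 2 + 6 * exp (pi * exp (pi * 16))"
proof -
  define \<Omega> where "\<Omega> = f ` ball 0 1"
  obtain w1 where w1: "w1 \<notin> \<Omega>" "norm w1 < 2"
    using univalent_omits_value_in_ball_2[OF holf inj f0 df] unfolding \<Omega>_def by blast
  have "simply_connected \<Omega>"
    unfolding \<Omega>_def
    by (rule simply_connected_univalent_image[OF holf open_ball _ inj])
      (simp add: convex_imp_simply_connected)
  moreover have "open \<Omega>"
    unfolding \<Omega>_def by (rule open_mapping_thm3[OF holf open_ball inj])
  ultimately obtain w2 where w2: "w2 \<notin> \<Omega>" "norm w2 = 2 * norm w1"
    using simply_connected_complement_meets_circle[OF _ _ w1(1), of "2 * norm w1"] by auto
  have w1_nz: "w1 \<noteq> 0"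
    using w1 f0 unfolding \<Omega>_def by force
  have w21: "norm w1 \<le> norm (w2 - w1)" "norm (w2 - w1) \<le> 3 * norm w1"
    using norm_triangle_ineq2[of w2 w1] norm_triangle_ineq4[of w2 w1] w2 by auto
  then have w21_nz: "w2 - w1 \<noteq> 0"
    using w1_nz by auto
  \<comment> \<open>Normalised so that the two omitted values become \<open>0\<close> and \<open>1\<close>, as Schottky's theorem requires.\<close>
  define S where "S z = (f (z / 2) - w1) / (w2 - w1)" for z
  have half_in: "z / 2 \<in> ball 0 1" if "z \<in> cball 0 1" for z :: complex
    using that by (simp add: norm_divide)
  have "norm (S (2 * q)) \<le> exp (pi * exp (pi * (2 + 2 * 1 + 12 * (1/2) / (1 - 1/2))))"
  proof (rule Schottky[of S 1 "1/2" "2 * q"])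
    show "S holomorphic_on cball 0 1"
      unfolding S_def using half_in
      by (intro holomorphic_intros holomorphic_on_compose_gen[OF _ holf, unfolded o_def]) auto
    show "norm (S 0) \<le> 1"
      using w21 w21_nz by (simp add: S_def f0 norm_divide divide_le_eq)
    show "\<not> (S z = 0 \<or> S z = 1)" if "z \<in> cball 0 1" for z
      using w1 w2 w21_nz half_in[OF that] by (auto simp: S_def \<Omega>_def divide_eq_1_iff)
  qed (use q in \<open>auto simp: norm_mult\<close>)
  then have S_bound: "norm (S (2 * q)) \<le> exp (pi * exp (pi * 16))"
    by simp
  have "f q = w1 + (w2 - w1) * S (2 * q)"
    using w21_nz by (simp add: S_def)
  then have "norm (f q) \<le> norm w1 + norm (w2 - w1) * norm (S (2 * q))"
    by (metis norm_mult norm_triangle_ineq)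
  also have "\<dots> \<le> 2 + 6 * exp (pi * exp (pi * 16))"
    using w1 w21 S_bound by (intro add_mono mult_mono) auto
  finally show ?thesis .
qed

lemma norm_le_div_of_norm_mult_le:
  fixes p :: "complex \<Rightarrow> complex"
  assumes holp: "p holomorphic_on ball 0 1" and r: "0 < r" "r < 1"
    and bound: "\<And>w. norm w = r \<Longrightarrow> norm (w * p w) \<le> B" and z: "norm z < r"
  shows "norm (p z) \<le> B / r"
proof (rule maximum_modulus_frontier[of p "ball 0 r"])
  show "p holomorphic_on interior (ball 0 r)"
    using r by (auto intro: holomorphic_on_subset[OF holp])
  show "continuous_on (closure (ball 0 r)) p"
    using r by (auto intro!: holomorphic_on_imp_continuous_on holomorphic_on_subset[OF holp])
  fix w :: complex assume "w \<in> frontier (ball 0 r)"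
  then have w: "norm w = r"
    using r by (simp add: frontier_ball)
  then show "norm (p w) \<le> B / r"
    using bound[OF w] r by (simp add: norm_mult field_simps)
qed (use z in auto)

lemma norm_le_of_norm_mult_exp_le:
  fixes g :: "complex \<Rightarrow> complex"
  assumes holg: "g holomorphic_on ball 0 1" and g0: "g 0 = of_real \<alpha>" and \<alpha>: "\<bar>\<alpha>\<bar> \<le> 1"
    and bound: "\<And>q. norm q \<le> 1/4 \<Longrightarrow> norm (q * exp (2 * of_real pi * \<i> * g q)) \<le> B"
    and B: "1 \<le> B" and q: "norm q \<le> 1/8"
  shows "norm (g q) \<le> 1 + (ln (4 * B) + 1) / pi"
proof -
  define p where "p z = exp (2 * of_real pi * \<i> * g z)" for z
  have holp: "p holomorphic_on ball 0 1"
    unfolding p_def by (intro holomorphic_intros holg)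
  have p_bound: "norm (p z) \<le> 4 * B" if "z \<in> ball 0 (1/4)" for z
    using norm_le_div_of_norm_mult_le[OF holp, of "1/4" B z] bound that by (simp add: p_def)
  define A where "A = ln (4 * B) + 1"
  have "norm (2 * of_real pi * \<i> * (g q - \<alpha>)) \<le> 2 * A * norm q / (1/4 - norm q)"
  proof (rule Borel_Caratheodory)
    show "(\<lambda>z. 2 * of_real pi * \<i> * (g z - \<alpha>)) holomorphic_on ball 0 (1/4)"
      by (intro holomorphic_intros holomorphic_on_subset[OF holg]) auto
    show "Re (2 * of_real pi * \<i> * (g z - \<alpha>)) < A" if "z \<in> ball 0 (1/4)" for z
    proof -
      have "Re (2 * of_real pi * \<i> * (g z - \<alpha>)) = ln (norm (p z))"
        by (simp add: p_def)
      also have "\<dots> \<le> ln (4 * B)"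
        by (rule ln_mono[OF p_bound[OF that]]) (simp add: p_def)
      finally show ?thesis by (simp add: A_def)
    qed
  qed (use g0 q in auto)
  also have "\<dots> \<le> 2 * A"
  proof -
    have "0 < A" using B by (simp add: A_def add_nonneg_pos)
    then show ?thesis
      using q mult_left_mono[of "norm q / (1/4 - norm q)" 1 "2 * A"] by (simp add: divide_le_eq)
  qed
  finally have "2 * pi * norm (g q - \<alpha>) \<le> 2 * A"
    by (simp add: norm_mult)
  then have "norm (g q - \<alpha>) \<le> A / pi"
    by (simp add: field_simps)
  then show ?thesis
    using norm_triangle_ineq[of "g q - \<alpha>" \<alpha>] \<alpha> by (simp add: A_def)
qed

section \<open>Estimates for the class \<open>S(\<alpha>)\<close>\<close>

definition q_conjugate :: "(complex \<Rightarrow> complex) \<Rightarrow> real \<Rightarrow> complex \<Rightarrow> complex" where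
  "q_conjugate F \<alpha> q = q * exp (2 * of_real pi * \<i> * q_displacement F \<alpha> q)"

lemma q_conjugate_qexp:
  assumes F: "F \<in> S_class \<alpha>" and W: "W \<in> upper_half_plane"
  shows "q_conjugate F \<alpha> (qexp W) = qexp (F W)"
proof -
  have "qexp W * exp (2 * of_real pi * \<i> * (F W - W)) = qexp (F W)"
    by (simp add: qexp_def exp_add[symmetric] algebra_simps)
  then show ?thesis
    by (simp add: q_conjugate_def q_displacement_qexp[OF F W])
qed

lemma q_conjugate_holomorphic: "F \<in> S_class \<alpha> \<Longrightarrow> q_conjugate F \<alpha> holomorphic_on ball 0 1"
  unfolding q_conjugate_def[abs_def] by (intro holomorphic_intros q_displacement_holomorphic)

lemma norm_deriv_q_conjugate_0:
  assumes F: "F \<in> S_class \<alpha>"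
  shows "norm (deriv (q_conjugate F \<alpha>) 0) = 1"
proof -
  define p where "p q = exp (2 * of_real pi * \<i> * q_displacement F \<alpha> q)" for q
  have "p holomorphic_on ball 0 1"
    unfolding p_def by (intro holomorphic_intros q_displacement_holomorphic[OF F])
  then have "(p has_field_derivative deriv p 0) (at 0)"
    by (intro DERIV_deriv_iff_field_differentiable[THEN iffD2]
        holomorphic_on_imp_differentiable_at) auto
  from DERIV_mult[OF DERIV_ident this]
  have "(q_conjugate F \<alpha> has_field_derivative p 0) (at 0)"
    by (simp add: q_conjugate_def[abs_def] p_def)
  then show ?thesis
    by (simp add: DERIV_imp_deriv p_def q_displacement_def)
qed

lemma inj_on_q_conjugate:
  assumes F: "F \<in> S_class \<alpha>"
  shows "inj_on (q_conjugate F \<alpha>) (ball 0 1)"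
proof (rule inj_onI)
  fix q1 q2 :: complex
  assume q: "q1 \<in> ball 0 1" "q2 \<in> ball 0 1" and eq: "q_conjugate F \<alpha> q1 = q_conjugate F \<alpha> q2"
  show "q1 = q2"
  proof (cases "q1 = 0 \<or> q2 = 0")
    case True
    then show ?thesis using eq by (auto simp: q_conjugate_def)
  next
    case False
    define W1 W2 where "W1 = qlog q1" and "W2 = qlog q2"
    have W: "W1 \<in> upper_half_plane" "W2 \<in> upper_half_plane"
      using qlog_in_upper_half_plane False q by (auto simp: W1_def W2_def)
    have qW: "qexp W1 = q1" "qexp W2 = q2"
      using qexp_qlog False by (auto simp: W1_def W2_def)
    have "qexp (F W1) = qexp (F W2)"
      using eq q_conjugate_qexp[OF F W(1)] q_conjugate_qexp[OF F W(2)] qW by simp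
    then obtain n :: int where "F W1 = F W2 + of_int n"
      using qexp_eq_iff by blast
    then have "F W1 = F (W2 + of_int n)"
      using S_class_add_of_int[OF F W(2)] by simp
    moreover have "W2 + of_int n \<in> upper_half_plane"
      using W(2) by (simp add: upper_half_plane_def)
    ultimately have "W1 = W2 + of_int n"
      using F W(1) by (auto simp: S_class_def dest: inj_onD)
    then show ?thesis
      using qW qexp_add_of_int by metis
  qed
qed

definition q_displacement_bound :: real where
  "q_displacement_bound = 1 + (ln (4 * (2 + 6 * exp (pi * exp (pi * 16)))) + 1) / pi"

lemma one_le_q_displacement_bound: "1 \<le> q_displacement_bound"
  by (simp add: q_displacement_bound_def add_nonneg_nonneg)

lemma norm_q_displacement_le:
  assumes F: "F \<in> S_class \<alpha>" and \<alpha>: "\<bar>\<alpha>\<bar> \<le> 1" and q: "norm q \<le> 1/8"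
  shows "norm (q_displacement F \<alpha> q) \<le> q_displacement_bound"
  unfolding q_displacement_bound_def
proof (rule norm_le_of_norm_mult_exp_le[OF q_displacement_holomorphic[OF F] _ \<alpha> _ _ q])
  show "norm (q * exp (2 * of_real pi * \<i> * q_displacement F \<alpha> q))
      \<le> 2 + 6 * exp (pi * exp (pi * 16))" if "norm q \<le> 1/4" for q
    using univalent_bound_on_ball_quarter[OF q_conjugate_holomorphic[OF F] inj_on_q_conjugate[OF F]
        _ norm_deriv_q_conjugate_0[OF F] that]
    by (simp add: q_conjugate_def)
qed (simp_all add: q_displacement_def add_increasing)

lemma q_displacement_zero_eq_qexp:
  assumes F: "F \<in> S_class \<alpha>" and "\<alpha> \<noteq> 0"
    and fixed_points: "\<forall>W\<in>upper_half_plane. F W = W \<longrightarrow> (\<exists>n::int. W = Z0 + of_int n)"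
    and q: "norm q < 1" "q_displacement F \<alpha> q = 0"
  shows "q = qexp Z0"
proof -
  have "q \<noteq> 0" using q \<open>\<alpha> \<noteq> 0\<close> by (auto simp: q_displacement_def)
  then have W: "qlog q \<in> upper_half_plane" "qexp (qlog q) = q"
    using qlog_in_upper_half_plane qexp_qlog q by auto
  then have "F (qlog q) = qlog q"
    using q_displacement_qexp[OF F W(1)] q by simp
  then obtain n :: int where "qlog q = Z0 + of_int n"
    using fixed_points W by blast
  then show ?thesis
    using W qexp_add_of_int by metis
qed

lemma norm_qexp_le_of_Im_ge:
  assumes Z0: "Z0 \<in> upper_half_plane" and \<kappa>: "0 < \<kappa>" and L: "0 < L"
    and Im: "Im Z0 + (1 / (2 * pi)) * (ln L - ln (1 + 2 * pi * Im Z0)) + - ln \<kappa> / (2 * pi) \<le> Im Z"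
  shows "norm (qexp Z) \<le> \<kappa> * norm (qexp Z0) * (1 + ln (1 / norm (qexp Z0))) / L"
proof -
  have P: "0 < 1 + 2 * pi * Im Z0"
    using Z0 by (simp add: upper_half_plane_def add_pos_pos)
  have "2 * pi * (Im Z0 + (1 / (2 * pi)) * (ln L - ln (1 + 2 * pi * Im Z0)) + - ln \<kappa> / (2 * pi))
      \<le> 2 * pi * Im Z"
    using Im by (intro mult_left_mono) auto
  then have "- 2 * pi * Im Z \<le> - 2 * pi * Im Z0 - ln L + ln (1 + 2 * pi * Im Z0) + ln \<kappa>"
    by (simp add: algebra_simps)
  then have "norm (qexp Z) \<le> exp (- 2 * pi * Im Z0 - ln L + ln (1 + 2 * pi * Im Z0) + ln \<kappa>)"
    by (simp add: norm_qexp)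
  also have "\<dots> = \<kappa> * exp (- 2 * pi * Im Z0) * (1 + 2 * pi * Im Z0) / L"
    using L P \<kappa> by (simp add: exp_add exp_diff)
  finally show ?thesis
    by (simp add: norm_qexp ln_div)
qed

lemma S_class_displacement_estimate:
  assumes \<delta>: "0 < \<delta>" "\<delta> \<le> 3" and Z0: "Z0 \<in> upper_half_plane" and \<alpha>: "0 < \<alpha>" "\<alpha> < 1"
    and F: "F \<in> S_class \<alpha>"
    and fixed_points: "\<forall>W\<in>upper_half_plane. F W = W \<longrightarrow> (\<exists>n::int. W = Z0 + of_int n)"
    and Z: "Z \<in> upper_half_plane"
    and Im: "Im Z0 + (1 / (2 * pi)) * (ln (ln (exp 1 / \<alpha>)) - ln (1 + 2 * pi * Im Z0))
      + - ln (\<delta> * (1/8)\<^sup>2 / (96 * (ln q_displacement_bound + 1))) / (2 * pi) \<le> Im Z"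
  shows "norm (F Z - Z - \<alpha>) \<le> \<delta> * \<alpha>"
proof -
  interpret disc_function_bounded_near_0 "q_displacement F \<alpha>" q_displacement_bound "1/8" \<alpha>
    using q_displacement_holomorphic[OF F] norm_q_displacement_le[OF F] one_le_q_displacement_bound \<alpha>
    by unfold_locales (auto simp: q_displacement_def)
  have "0 \<le> ln q_displacement_bound"
    using one_le_q_displacement_bound by simp
  then have "0 < \<delta> * (1/8)\<^sup>2 / (96 * (ln q_displacement_bound + 1))" "0 < ln (exp 1 / \<alpha>)"
    using \<delta> one_le_ln_e_div_\<alpha> by (auto intro!: divide_pos_pos)
  note qexp_Z = norm_qexp_le_of_Im_ge[OF Z0 this Im]
  have "norm (q_displacement F \<alpha> (qexp Z) - \<alpha>) \<le> \<delta> * \<alpha>"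
  proof (rule norm_diff_le_of_at_most_one_zero[OF _ _ \<delta> qexp_Z])
    show "w = qexp Z0" if "norm w < 1" "q_displacement F \<alpha> w = 0" for w
      using q_displacement_zero_eq_qexp[OF F _ fixed_points that] \<alpha> by simp
  qed (simp add: qexp_nonzero)
  then show ?thesis
    by (simp add: q_displacement_qexp[OF F Z])
qed

theorem mainTheorem12:
  fixes \<delta> :: real
  assumes "0 < \<delta>" and "\<delta> < 1/10"
  shows "\<exists>C::real. \<forall>Z0 \<alpha> F Z.
     Z0 \<in> upper_half_plane \<longrightarrow> 0 < \<alpha> \<longrightarrow> \<alpha> < 1 \<longrightarrow> F \<in> S_class \<alpha> \<longrightarrow>
     (\<forall>W\<in>upper_half_plane. F W = W \<longrightarrow> (\<exists>n::int. W = Z0 + of_int n)) \<longrightarrow>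
     Z \<in> upper_half_plane \<longrightarrow>
     Im Z \<ge> Im Z0 + (1 / (2 * pi)) * (ln (ln (exp 1 / \<alpha>)) - ln (1 + 2 * pi * Im Z0)) + C \<longrightarrow>
     cmod (F Z - Z - complex_of_real \<alpha>) \<le> \<delta> * \<alpha>"
  using S_class_displacement_estimate[of \<delta>] assms
  by (intro exI[of _ "- ln (\<delta> * (1/8)\<^sup>2 / (96 * (ln q_displacement_bound + 1))) / (2 * pi)"]) auto

end
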